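(* Let $\mathfrak h\in\mathrm{Mult}_\rho$, let $\Delta$ be a segment admissible to $\mathfrak h$, and let $\Delta'$ be a segment linked to $\Delta$ with $\Delta'>\Delta$. The following are equivalent: (1) $(\Delta,\Delta',\mathfrak h)$ satisfies the non-overlapping property; (2) $\eta_{\Delta'}(\mathfrak h)=\eta_{\Delta'}(\mathfrak r(\Delta,\mathfrak h))$; (3) $(\Delta,\Delta',\mathfrak h)$ satisfies the intermediate segment property.
   Context: Segments: for integers $a\le b$, $[a,b]_\rho$ (think of the integer interval $\{a,\dots,b\}$), with $a(\Delta)=a$, $b(\Delta)=b$, and inclusion of segments as intervals. Two segments are linked if their union is a segment (an interval) and neither contains the other; for linked $\Delta,\Delta'$ write $\Delta<\Delta'$ (or $\Delta'>\Delta$) if $b(\Delta)<b(\Delta')$. A multisegment is a finite multiset of nonempty segments; $\mathrm{Mult}_\rho$ is the set of multisegments; $+$, $-$ are multiset sum and difference (adding an empty segment does nothing); $\mathfrak h[c]$ is the submultisegment of segments of $\mathfrak h$ starting at $c$. Write $[x,y]_\rho\prec^L[x',y']_\rho$ if $x<x'$, or $x=x'$ and $y<y'$. A segment $\Delta=[a,b]_\rho$ is admissible to $\mathfrak h$ if $\mathfrak h$ contains a segment $[a,c]_\rho$ with $c\ge b$. Removal process: for $\Delta=[a,b]_\rho$ admissible to $\mathfrak h$, let $\Delta_1=[a_1,b_1]_\rho$ be a shortest segment of $\mathfrak h$ with $a_1=a$ and $b_1\ge b$; recursively, let $\Delta_i=[a_i,b_i]_\rho$ be the $\prec^L$-minimal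 segment of $\mathfrak h$ with $a_{i-1}<a_i$ and $b\le b_i<b_{i-1}$, stopping when none exists; $\Delta_1,\dots,\Delta_r$ is the removal sequence for $(\Delta,\mathfrak h)$. Put $\Delta_i^{tr}=[a_{i+1},b_i]_\rho$ for $i<r$ and $\Delta_r^{tr}=[b+1,b_r]_\rho$ (possibly empty), and $\mathfrak r(\Delta,\mathfrak h)=\mathfrak h-\sum_i\Delta_i+\sum_i\Delta_i^{tr}$. For a segment $\Delta=[a,b]_\rho$, $\varepsilon_\Delta(\mathfrak h)=|\{\widetilde\Delta\in\mathfrak h[a]:\Delta\subset\widetilde\Delta\}|$ (with multiplicity), and $\eta_\Delta(\mathfrak h)=(\varepsilon_{[a,b]_\rho}(\mathfrak h),\varepsilon_{[a+1,b]_\rho}(\mathfrak h),\dots,\varepsilon_{[b,b]_\rho}(\mathfrak h))$. Non-overlapping property: the triple $(\Delta,\Delta',\mathfrak h)$ satisfies it if, for the shortest segment $\overline\Delta$ in the removal sequence for $(\Delta,\mathfrak h)$ that contains the point $a(\Delta')-1$, one has $\Delta'\not\subset\overline\Delta$. Intermediate segment property: the triple $(\Delta,\Delta',\mathfrak h)$ satisfies it if there is $\widetilde\Delta\in\mathfrak h$ with $a(\Delta)\le a(\widetilde\Delta)<a(\Delta')$ and $b(\Delta)\le b(\widetilde\Delta)<b(\Delta')$. *)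

theory Defs
  imports Main "HOL-Library.Multiset" "HOL-Library.Product_Lexorder"
begin

text \<open>A segment [a,b]_rho is represented by the pair (a,b) of integers; it is
nonempty iff a \<le> b. The cuspidal rho is a fixed label and plays no role.
The product order on int \<times> int (Product_Lexorder) is exactly the order \<prec>L.\<close>

type_synonym seg = "int \<times> int"

definition seg_set :: "seg \<Rightarrow> int set" where
  "seg_set d = {fst d .. snd d}"

definition nonempty_seg :: "seg \<Rightarrow> bool" where
  "nonempty_seg d \<longleftrightarrow> fst d \<le> snd d"

definition is_mult :: "seg multiset \<Rightarrow> bool" where
  "is_mult h \<longleftrightarrow> (\<forall>d \<in># h. nonempty_seg d)"

definition linked :: "seg \<Rightarrow> seg \<Rightarrow> bool" where
  "linked d e \<longleftrightarrow> (\<exists>x y. seg_set d \<union> seg_set e = {x..y})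
      \<and> \<not> seg_set d \<subseteq> seg_set e \<and> \<not> seg_set e \<subseteq> seg_set d"

definition admissible :: "seg \<Rightarrow> seg multiset \<Rightarrow> bool" where
  "admissible d h \<longleftrightarrow> (\<exists>c. c \<ge> snd d \<and> (fst d, c) \<in># h)"

definition rcand :: "seg multiset \<Rightarrow> int \<Rightarrow> seg \<Rightarrow> seg set" where
  "rcand h b p = {d \<in> set_mset h. fst p < fst d \<and> b \<le> snd d \<and> snd d < snd p}"

lemma rcand_Min:
  assumes "rcand h b p \<noteq> {}"
  shows "Min (rcand h b p) \<in> rcand h b p"
proof -
  have "finite (rcand h b p)" unfolding rcand_def by simp
  thus ?thesis using assms by (rule Min_in)
qed

text \<open>Steps 2,3,... of the removal sequence, starting after the segment p.\<close>
function rseq :: "seg multiset \<Rightarrow> int \<Rightarrow> seg \<Rightarrow> seg list" where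
  "rseq h b p = (if rcand h b p = {} then []
                 else Min (rcand h b p) # rseq h b (Min (rcand h b p)))"
  by pat_completeness auto
termination
proof (relation "measure (\<lambda>(h, b, p). nat (snd p - b))")
  fix h b p
  assume "rcand h b p \<noteq> {}"
  from rcand_Min[OF this] show "((h, b, Min (rcand h b p)), h, b, p)
      \<in> measure (\<lambda>(h, b, p). nat (snd p - b))"
    unfolding rcand_def by auto
qed auto

definition first_rem :: "seg \<Rightarrow> seg multiset \<Rightarrow> seg" where
  "first_rem D h = (fst D, Min {c. (fst D, c) \<in># h \<and> snd D \<le> c})"

definition removal_seq :: "seg \<Rightarrow> seg multiset \<Rightarrow> seg list" where
  "removal_seq D h = first_rem D h # rseq h (snd D) (first_rem D h)"

fun truncs :: "int \<Rightarrow> seg list \<Rightarrow> seg list" where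
  "truncs b [] = []"
| "truncs b [d] = [(b + 1, snd d)]"
| "truncs b (d # e # L) = (fst e, snd d) # truncs b (e # L)"

definition removal :: "seg \<Rightarrow> seg multiset \<Rightarrow> seg multiset" where
  "removal D h = h - mset (removal_seq D h)
      + filter_mset nonempty_seg (mset (truncs (snd D) (removal_seq D h)))"

definition eps :: "seg \<Rightarrow> seg multiset \<Rightarrow> nat" where
  "eps D h = size (filter_mset (\<lambda>e. fst e = fst D \<and> seg_set D \<subseteq> seg_set e) h)"

definition eta :: "seg \<Rightarrow> seg multiset \<Rightarrow> nat list" where
  "eta D h = map (\<lambda>i. eps (i, snd D) h) [fst D .. snd D]"

definition non_overlapping :: "seg \<Rightarrow> seg \<Rightarrow> seg multiset \<Rightarrow> bool" where
  "non_overlapping D D' h \<longleftrightarrow>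
     (\<exists>d \<in> set (removal_seq D h). fst D' - 1 \<in> seg_set d
        \<and> (\<forall>e \<in> set (removal_seq D h). fst D' - 1 \<in> seg_set e \<longrightarrow>
              snd d - fst d \<le> snd e - fst e)
        \<and> \<not> seg_set D' \<subseteq> seg_set d)"

definition intermediate_seg :: "seg \<Rightarrow> seg \<Rightarrow> seg multiset \<Rightarrow> bool" where
  "intermediate_seg D D' h \<longleftrightarrow>
     (\<exists>e \<in># h. fst D \<le> fst e \<and> fst e < fst D' \<and> snd D \<le> snd e \<and> snd e < snd D')"

end

theory Submission
  imports Defs
begin

text \<open>All three conditions are equivalent to the existence of a segment \<open>d\<close> in the removal
  sequence of \<open>(\<Delta>, \<hh>)\<close> with \<open>a(d) < a(\<Delta>')\<close> and \<open>b(d) < b(\<Delta>')\<close>. Along the removal sequence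
  starts strictly increase and ends strictly decrease, and by \<open>\<prec>\<^sup>L\<close>-minimality every segment of
  \<open>\<hh>\<close> to the right of \<open>\<Delta>\<close> dominates one of its members; this gives the intermediate segment
  property. The shortest member containing \<open>a(\<Delta>') - 1\<close> is the last one starting before
  \<open>a(\<Delta>')\<close>, which gives non-overlapping. If such a \<open>d\<close> exists, no removed or truncated
  segment starts in \<open>\<Delta>'\<close> and reaches \<open>b(\<Delta>')\<close>, so \<open>\<eta>\<^sub>\<Delta>'\<close> is unchanged; otherwise
  truncation strictly increases the number of segments counted by \<open>\<eta>\<^sub>\<Delta>'\<close>.\<close>

declare rseq.simps [simp del]

lemma rseq_nth:
  assumes "j < length (p # rseq h b p)"
  shows "(Suc j < length (p # rseq h b p) \<longleftrightarrow> rcand h b ((p # rseq h b p) ! j) \<noteq> {})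
    \<and> (Suc j < length (p # rseq h b p) \<longrightarrow>
         (p # rseq h b p) ! Suc j = Min (rcand h b ((p # rseq h b p) ! j)))"
  using assms
proof (induction h b p arbitrary: j rule: rseq.induct)
  case (1 h b p)
  show ?case
  proof (cases "rcand h b p = {}")
    case True
    then show ?thesis using "1.prems" by (simp add: rseq.simps)
  next
    case False
    then have "rseq h b p = Min (rcand h b p) # rseq h b (Min (rcand h b p))"
      by (simp add: rseq.simps)
    then show ?thesis using 1 False by (cases j) auto
  qed
qed

lemma truncs_nth:
  assumes "xs \<noteq> []"
  shows "length (truncs c xs) = length xs"
    and "j < length xs \<Longrightarrow> truncs c xs ! j
           = (if Suc j < length xs then fst (xs ! Suc j) else c + 1, snd (xs ! j))"
proof -
  have "length (truncs c xs) = length xs \<and> (\<forall>j<length xs. truncs c xs ! j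
          = (if Suc j < length xs then fst (xs ! Suc j) else c + 1, snd (xs ! j)))"
    using assms by (induction c xs rule: truncs.induct) (auto simp: nth_Cons split: nat.split)
  then show "length (truncs c xs) = length xs"
    and "j < length xs \<Longrightarrow> truncs c xs ! j
           = (if Suc j < length xs then fst (xs ! Suc j) else c + 1, snd (xs ! j))"
    by auto
qed

lemma ex_last_index:
  assumes "i < length xs" and "P (xs ! i)"
  shows "\<exists>k<length xs. P (xs ! k) \<and> (\<forall>j<length xs. P (xs ! j) \<longrightarrow> j \<le> k)"
  using Nat.ex_has_greatest_nat[of "\<lambda>j. j < length xs \<and> P (xs ! j)" i "length xs"] assms
  by auto

lemma size_filter_mset_fst_interval:
  fixes M :: "(int \<times> 'b) multiset"
  shows "size {#e \<in># M. a \<le> fst e \<and> fst e \<le> b \<and> Q e#}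
    = (\<Sum>i\<in>{a..b}. size {#e \<in># M. fst e = i \<and> Q e#})"
proof (induction M)
  case (add x M)
  have "(\<Sum>i\<in>{a..b}. size {#e \<in># add_mset x M. fst e = i \<and> Q e#})
      = (\<Sum>i\<in>{a..b}. size {#e \<in># M. fst e = i \<and> Q e#} + (if i = fst x \<and> Q x then 1 else 0))"
    by (rule sum.cong) auto
  with add show ?case
    by (simp add: sum.distrib sum.delta)
qed simp

lemma eta_conv_counts:
  "eta D' M = map (\<lambda>i. size {#e \<in># M. fst e = i \<and> snd D' \<le> snd e#}) [fst D'..snd D']"
  unfolding eta_def eps_def seg_set_def
  by (intro map_cong refl arg_cong[where f = size] filter_mset_cong) auto

definition eta_relevant :: "seg \<Rightarrow> seg \<Rightarrow> bool" where
  "eta_relevant D' e \<longleftrightarrow> fst D' \<le> fst e \<and> fst e \<le> snd D' \<and> snd D' \<le> snd e"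

lemma sum_list_eta: "sum_list (eta D' M) = size (filter_mset (eta_relevant D') M)"
proof -
  have "sum_list (eta D' M) = (\<Sum>i\<in>{fst D'..snd D'}. size {#e \<in># M. fst e = i \<and> snd D' \<le> snd e#})"
    by (simp add: eta_conv_counts sum_list_distinct_conv_sum_set)
  also have "\<dots> = size {#e \<in># M. fst D' \<le> fst e \<and> fst e \<le> snd D' \<and> snd D' \<le> snd e#}"
    by (rule size_filter_mset_fst_interval[symmetric])
  finally show ?thesis
    by (simp add: eta_relevant_def[abs_def])
qed

lemma eta_diff_add:
  assumes "\<forall>e\<in>#A. \<not> (fst D' \<le> fst e \<and> snd D' \<le> snd e)"
    and "\<forall>e\<in>#B. \<not> (fst D' \<le> fst e \<and> snd D' \<le> snd e)"
  shows "eta D' (M - A + B) = eta D' M"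
  unfolding eta_conv_counts
proof (rule map_cong[OF refl])
  fix i assume "i \<in> set [fst D'..snd D']"
  then have A: "{#e \<in># A. fst e = i \<and> snd D' \<le> snd e#} = {#}"
    and B: "{#e \<in># B. fst e = i \<and> snd D' \<le> snd e#} = {#}"
    using assms by auto
  show "size {#e \<in># M - A + B. fst e = i \<and> snd D' \<le> snd e#}
      = size {#e \<in># M. fst e = i \<and> snd D' \<le> snd e#}"
    unfolding filter_union_mset filter_diff_mset A B by simp
qed

locale admissible_segment =
  fixes h :: "seg multiset" and D :: seg
  assumes is_mult: "is_mult h" and admissible: "admissible D h"
begin

abbreviation rs :: "seg list" where
  "rs \<equiv> removal_seq D h"

lemma first_rem_in: "first_rem D h \<in># h" "snd D \<le> snd (first_rem D h)"
  and first_rem_shortest: "(fst D, c) \<in># h \<Longrightarrow> snd D \<le> c \<Longrightarrow> snd (first_rem D h) \<le> c"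
proof -
  let ?C = "{c. (fst D, c) \<in># h \<and> snd D \<le> c}"
  have fin: "finite ?C"
    by (rule finite_subset[of _ "snd ` set_mset h"]) force+
  have "?C \<noteq> {}"
    using admissible by (auto simp: admissible_def)
  with fin have "Min ?C \<in> ?C"
    by (rule Min_in)
  moreover from fin have "c \<in> ?C \<Longrightarrow> Min ?C \<le> c"
    by (rule Min_le)
  ultimately show "first_rem D h \<in># h" "snd D \<le> snd (first_rem D h)"
    and "(fst D, c) \<in># h \<Longrightarrow> snd D \<le> c \<Longrightarrow> snd (first_rem D h) \<le> c"
    by (auto simp: first_rem_def)
qed

lemma rs_nonempty: "rs \<noteq> []"
  and rs_nth_0: "rs ! 0 = first_rem D h"
  by (simp_all add: removal_seq_def)

lemma rs_nth_Suc:
  assumes "Suc j < length rs"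
  shows "rs ! Suc j = Min (rcand h (snd D) (rs ! j))"
    and "rs ! Suc j \<in> rcand h (snd D) (rs ! j)"
proof -
  have "rcand h (snd D) (rs ! j) \<noteq> {}" and "rs ! Suc j = Min (rcand h (snd D) (rs ! j))"
    using assms rseq_nth[of j "first_rem D h" h "snd D"] by (auto simp: removal_seq_def)
  then show "rs ! Suc j = Min (rcand h (snd D) (rs ! j))"
    and "rs ! Suc j \<in> rcand h (snd D) (rs ! j)"
    using rcand_Min by auto
qed

lemma rs_continues:
  assumes "j < length rs" and "rcand h (snd D) (rs ! j) \<noteq> {}"
  shows "Suc j < length rs"
  using assms rseq_nth[of j "first_rem D h" h "snd D"] by (auto simp: removal_seq_def)

lemma rs_nth_in:
  assumes "j < length rs"
  shows "rs ! j \<in># h" and "snd D \<le> snd (rs ! j)"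
proof -
  have "rs ! j \<in># h \<and> snd D \<le> snd (rs ! j)"
  proof (cases j)
    case 0
    then show ?thesis using first_rem_in by (simp add: rs_nth_0)
  next
    case (Suc k)
    then show ?thesis using rs_nth_Suc(2)[of k] assms by (auto simp: rcand_def)
  qed
  then show "rs ! j \<in># h" and "snd D \<le> snd (rs ! j)" by auto
qed

lemma rs_sorted: "sorted_wrt (\<lambda>d e. fst d < fst e \<and> snd e < snd d) rs"
proof (subst sorted_wrt_iff_nth_Suc_transp)
  show "transp (\<lambda>d e :: seg. fst d < fst e \<and> snd e < snd d)"
    by (auto intro: transpI)
  show "\<forall>j. Suc j < length rs \<longrightarrow> fst (rs ! j) < fst (rs ! Suc j) \<and> snd (rs ! Suc j) < snd (rs ! j)"
    using rs_nth_Suc(2) by (auto simp: rcand_def)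
qed

lemma rs_nth_less:
  "i < j \<Longrightarrow> j < length rs \<Longrightarrow> fst (rs ! i) < fst (rs ! j) \<and> snd (rs ! j) < snd (rs ! i)"
  using sorted_wrt_nth_less[OF rs_sorted] by blast

lemma rs_submset: "mset rs \<subseteq># h"
proof -
  have "distinct rs"
    using sorted_wrt_mono_rel[OF _ rs_sorted, of "(<)"] strict_sorted_iff
    by (auto simp: less_prod_def)
  moreover have "set rs \<subseteq> set_mset h"
    by (metis in_set_conv_nth rs_nth_in(1) subsetI)
  ultimately have "mset rs \<subseteq># mset_set (set_mset h)"
    by (metis finite_set_mset mset_set_set subset_imp_msubset_mset_set)
  then show ?thesis
    using mset_set_set_mset_msubset subset_mset.order_trans by blast
qed

lemma rs_mem:
  assumes "d \<in> set rs"
  shows "d \<in># h" and "fst D \<le> fst d" and "snd D \<le> snd d"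
proof -
  obtain j where j: "j < length rs" "d = rs ! j"
    using assms by (auto simp: in_set_conv_nth)
  have "fst (rs ! 0) = fst D"
    by (simp add: rs_nth_0 first_rem_def)
  then have "fst D \<le> fst (rs ! j)"
    using rs_nth_less[of 0 j] j by (cases j) auto
  then show "d \<in># h" and "fst D \<le> fst d" and "snd D \<le> snd d"
    using rs_nth_in j by auto
qed

text \<open>This is where the \<open>\<prec>\<^sup>L\<close>-minimality in the choice of the removal sequence enters.\<close>
lemma rs_dominates:
  assumes "e \<in># h" and "fst D \<le> fst e" and "snd D \<le> snd e"
  shows "\<exists>d\<in>set rs. fst d \<le> fst e \<and> snd d \<le> snd e"
proof (cases "fst e = fst D")
  case True
  then have "snd (first_rem D h) \<le> snd e"
    using first_rem_shortest[of "snd e"] assms by (metis prod.collapse)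
  moreover have "first_rem D h \<in> set rs" and "fst (first_rem D h) = fst D"
    by (simp_all add: removal_seq_def first_rem_def)
  ultimately show ?thesis
    using True by (intro bexI[of _ "first_rem D h"]) simp_all
next
  case False
  then have below: "fst (rs ! 0) < fst e"
    using assms(2) by (simp add: rs_nth_0 first_rem_def)
  obtain k where k: "k < length rs" "fst (rs ! k) < fst e"
    and k_last: "\<And>j. j < length rs \<Longrightarrow> fst (rs ! j) < fst e \<Longrightarrow> j \<le> k"
    using ex_last_index[of 0 rs "\<lambda>d. fst d < fst e"] rs_nonempty below by auto
  show ?thesis
  proof (cases "snd e < snd (rs ! k)")
    case True
    then have e_cand: "e \<in> rcand h (snd D) (rs ! k)"
      using k assms by (auto simp: rcand_def)
    then have k_Suc: "Suc k < length rs"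
      using rs_continues k(1) by blast
    have "rs ! Suc k \<le> e"
      unfolding rs_nth_Suc(1)[OF k_Suc] using e_cand by (simp add: rcand_def)
    moreover have "\<not> fst (rs ! Suc k) < fst e"
      using k_last[OF k_Suc] by auto
    ultimately have "fst (rs ! Suc k) \<le> fst e \<and> snd (rs ! Suc k) \<le> snd e"
      by (auto simp: less_eq_prod_def)
    then show ?thesis
      using k_Suc nth_mem by blast
  next
    case False
    then show ?thesis
      using k nth_mem by (metis less_imp_le not_less)
  qed
qed

lemma intermediate_seg_iff_rs:
  "intermediate_seg D D' h \<longleftrightarrow> (\<exists>d\<in>set rs. fst d < fst D' \<and> snd d < snd D')"
proof
  assume "intermediate_seg D D' h"
  then obtain e where e: "e \<in># h" "fst D \<le> fst e" "snd D \<le> snd e"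
    and "fst e < fst D'" "snd e < snd D'"
    by (auto simp: intermediate_seg_def)
  moreover obtain d where "d \<in> set rs" "fst d \<le> fst e" "snd d \<le> snd e"
    using rs_dominates[OF e] by blast
  ultimately show "\<exists>d\<in>set rs. fst d < fst D' \<and> snd d < snd D'"
    by (intro bexI[of _ d]) auto
next
  assume "\<exists>d\<in>set rs. fst d < fst D' \<and> snd d < snd D'"
  then obtain d where d: "d \<in> set rs" "fst d < fst D'" "snd d < snd D'"
    by blast
  then show "intermediate_seg D D' h"
    using rs_mem[OF d(1)] unfolding intermediate_seg_def by blast
qed

lemma non_overlapping_iff_rs:
  assumes "fst D' \<le> snd D + 1" and "fst D' \<le> snd D'"
  shows "non_overlapping D D' h \<longleftrightarrow> (\<exists>d\<in>set rs. fst d < fst D' \<and> snd d < snd D')"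
proof
  assume "non_overlapping D D' h"
  then obtain d where d: "d \<in> set rs" "fst D' - 1 \<in> seg_set d" "\<not> seg_set D' \<subseteq> seg_set d"
    unfolding non_overlapping_def by blast
  have "fst d < fst D'"
    using d(2) by (simp add: seg_set_def)
  moreover have "snd d < snd D'"
  proof (rule ccontr)
    assume "\<not> snd d < snd D'"
    then have "seg_set D' \<subseteq> seg_set d"
      using d(2) by (auto simp: seg_set_def)
    with d(3) show False ..
  qed
  ultimately show "\<exists>d\<in>set rs. fst d < fst D' \<and> snd d < snd D'"
    using d(1) by blast
next
  assume "\<exists>d\<in>set rs. fst d < fst D' \<and> snd d < snd D'"
  then obtain q where q: "q < length rs" "fst (rs ! q) < fst D'" "snd (rs ! q) < snd D'"
    by (auto simp: in_set_conv_nth)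
  then have below: "fst (rs ! 0) < fst D'"
    using rs_nth_less[of 0 q] by (cases q) auto
  obtain k where k: "k < length rs" "fst (rs ! k) < fst D'"
    and k_last: "\<And>j. j < length rs \<Longrightarrow> fst (rs ! j) < fst D' \<Longrightarrow> j \<le> k"
    using ex_last_index[of 0 rs "\<lambda>d. fst d < fst D'"] rs_nonempty below by auto
  have "snd (rs ! k) \<le> snd (rs ! q)"
    using rs_nth_less[of q k] k_last[OF q(1,2)] k(1) by (cases "q = k") auto
  then have "\<not> seg_set D' \<subseteq> seg_set (rs ! k)"
    using q(3) assms(2) by (auto simp: seg_set_def)
  moreover have "fst D' - 1 \<in> seg_set (rs ! k)"
    using k rs_nth_in(2)[OF k(1)] assms(1) by (auto simp: seg_set_def)
  moreover have "snd (rs ! k) - fst (rs ! k) \<le> snd e - fst e"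
    if e: "e \<in> set rs" "fst D' - 1 \<in> seg_set e" for e
  proof -
    obtain i where i: "i < length rs" "e = rs ! i"
      using e(1) by (auto simp: in_set_conv_nth)
    moreover have "fst e < fst D'"
      using e(2) by (simp add: seg_set_def)
    ultimately have "i \<le> k"
      using k_last by blast
    then show ?thesis
      using rs_nth_less[of i k] k(1) i by (cases "i = k") auto
  qed
  moreover have "rs ! k \<in> set rs"
    using k(1) by simp
  ultimately show "non_overlapping D D' h"
    unfolding non_overlapping_def by blast
qed

lemma eta_removal_eq:
  assumes "\<exists>d\<in>set rs. fst d < fst D' \<and> snd d < snd D'"
  shows "eta D' (removal D h) = eta D' h"
proof -
  let ?T = "truncs (snd D) rs"
  obtain q where q: "q < length rs" "fst (rs ! q) < fst D'" "snd (rs ! q) < snd D'"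
    using assms by (auto simp: in_set_conv_nth)
  have rs_clear: "\<not> (fst D' \<le> fst (rs ! j) \<and> snd D' \<le> snd (rs ! j))" if "j < length rs" for j
    using rs_nth_less[of j q] rs_nth_less[of q j] q that by (cases j q rule: linorder_cases) auto
  have T_clear: "\<not> (fst D' \<le> fst (?T ! j) \<and> snd D' \<le> snd (?T ! j))" if "j < length rs" for j
  proof (cases j q rule: linorder_cases)
    case less
    then have "fst (rs ! Suc j) \<le> fst (rs ! q)"
      using rs_nth_less[of "Suc j" q] q(1) by (cases "Suc j = q") auto
    then show ?thesis
      using truncs_nth(2)[OF rs_nonempty that] less q by auto
  next
    case equal
    then show ?thesis
      using truncs_nth(2)[OF rs_nonempty that] q by auto
  next
    case greater
    then show ?thesis
      using truncs_nth(2)[OF rs_nonempty that] rs_nth_less[of q j] q that by auto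
  qed
  have "\<forall>e\<in>set rs. \<not> (fst D' \<le> fst e \<and> snd D' \<le> snd e)"
    using rs_clear by (metis in_set_conv_nth)
  moreover have "\<forall>e\<in>set ?T. \<not> (fst D' \<le> fst e \<and> snd D' \<le> snd e)"
    using T_clear truncs_nth(1)[OF rs_nonempty] by (metis in_set_conv_nth)
  ultimately have "eta D' (h - mset rs + filter_mset nonempty_seg (mset ?T)) = eta D' h"
    by (intro eta_diff_add) auto
  then show ?thesis
    by (simp add: removal_def)
qed

text \<open>Truncating \<open>\<Delta>\<^sub>i\<close> to \<open>[a\<^sub>i\<^sub>+\<^sub>1, b\<^sub>i]\<close> turns each counted \<open>\<Delta>\<^sub>i\<^sub>+\<^sub>1\<close> into a counted
  truncation, and the truncation of the last member reaching \<open>b(\<Delta>')\<close> is counted in addition.\<close>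
lemma rs_relevant_less_truncs:
  assumes "fst D < fst D'" and "fst D' \<le> snd D + 1" and "snd D < snd D'"
    and no_below: "\<not> (\<exists>d\<in>set rs. fst d < fst D' \<and> snd d < snd D')"
  shows "length (filter (eta_relevant D') rs)
    < length (filter (\<lambda>t. nonempty_seg t \<and> eta_relevant D' t) (truncs (snd D) rs))"
proof -
  let ?n = "length rs" and ?T = "truncs (snd D) rs"
  define S1 where "S1 = {i. i < ?n \<and> eta_relevant D' (rs ! i)}"
  define S2 where "S2 = {j. j < ?n \<and> nonempty_seg (?T ! j) \<and> eta_relevant D' (?T ! j)}"
  note T_nth = truncs_nth(2)[OF rs_nonempty]
  have fst_0: "fst (rs ! 0) = fst D"
    by (simp add: rs_nth_0 first_rem_def)
  have far: "snd D' \<le> snd (rs ! j)" if "j < ?n" "fst (rs ! j) < fst D'" for j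
    using no_below that nth_mem by fastforce
  obtain m where m: "m < ?n" "snd D' \<le> snd (rs ! m)"
    and m_last: "\<And>j. j < ?n \<Longrightarrow> snd D' \<le> snd (rs ! j) \<Longrightarrow> j \<le> m"
    using ex_last_index[of 0 rs "\<lambda>d. snd D' \<le> snd d"] far[of 0] fst_0 assms(1) rs_nonempty
    by auto
  have "m \<in> S2"
  proof (cases "Suc m < ?n")
    case True
    then have "snd (rs ! Suc m) < snd D'"
      using m_last[of "Suc m"] by fastforce
    moreover have "fst (rs ! Suc m) \<le> snd (rs ! Suc m)"
      using rs_nth_in(1)[OF True] is_mult by (auto simp: is_mult_def nonempty_seg_def)
    moreover have "fst D' \<le> fst (rs ! Suc m)"
      using far[OF True] calculation(1) by force
    ultimately show ?thesis
      using T_nth[OF m(1)] True m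
      by (auto simp: S2_def eta_relevant_def nonempty_seg_def)
  next
    case False
    then show ?thesis
      using T_nth[OF m(1)] m assms(2,3)
      by (auto simp: S2_def eta_relevant_def nonempty_seg_def)
  qed
  have "S1 \<subseteq> Suc ` (S2 - {m})"
  proof
    fix i assume "i \<in> S1"
    then have i: "i < ?n" "eta_relevant D' (rs ! i)"
      by (auto simp: S1_def)
    then obtain j where j: "i = Suc j"
      using fst_0 assms(1) by (cases i) (auto simp: eta_relevant_def)
    then have "snd (rs ! i) < snd (rs ! j)" and "j \<noteq> m"
      using rs_nth_less[of j i] m_last[of i] i by (auto simp: eta_relevant_def)
    then have "j \<in> S2 - {m}"
      using T_nth[of j] i j rs_nth_less[of j i]
      by (auto simp: S2_def eta_relevant_def nonempty_seg_def)
    then show "i \<in> Suc ` (S2 - {m})"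
      using j by blast
  qed
  then have "card S1 \<le> card (S2 - {m})"
    using card_mono[of "Suc ` (S2 - {m})" S1] card_image[of Suc] by (simp add: S2_def)
  also have "\<dots> < card S2"
    using \<open>m \<in> S2\<close> by (intro card_Diff1_less) (auto simp: S2_def)
  finally show ?thesis
    by (simp add: length_filter_conv_card truncs_nth(1)[OF rs_nonempty] S1_def S2_def)
qed

lemma eta_removal_neq:
  assumes "fst D < fst D'" and "fst D' \<le> snd D + 1" and "snd D < snd D'"
    and "\<not> (\<exists>d\<in>set rs. fst d < fst D' \<and> snd d < snd D')"
  shows "eta D' (removal D h) \<noteq> eta D' h"
proof
  let ?G = "eta_relevant D'" and ?T = "truncs (snd D) rs"
  assume "eta D' (removal D h) = eta D' h"
  then have same: "size (filter_mset ?G (removal D h)) = size (filter_mset ?G h)"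
    by (metis sum_list_eta)
  have sub: "filter_mset ?G (mset rs) \<subseteq># filter_mset ?G h"
    using rs_submset by (rule multiset_filter_mono)
  have "size (filter_mset ?G (removal D h))
      = size (filter_mset ?G h - filter_mset ?G (mset rs))
        + size (filter_mset ?G (filter_mset nonempty_seg (mset ?T)))"
    by (simp only: removal_def filter_union_mset filter_diff_mset size_union)
  also have "\<dots> = size (filter_mset ?G h) - length (filter ?G rs)
        + length (filter (\<lambda>t. nonempty_seg t \<and> ?G t) ?T)"
    unfolding size_Diff_submset[OF sub]
    by (simp add: filter_filter_mset conj_commute flip: mset_filter)
  finally show False
    using same size_mset_mono[OF sub] rs_relevant_less_truncs[OF assms] by simp
qed

lemma eta_removal_eq_iff_rs:
  assumes "fst D < fst D'" and "fst D' \<le> snd D + 1" and "snd D < snd D'"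
  shows "eta D' h = eta D' (removal D h) \<longleftrightarrow> (\<exists>d\<in>set rs. fst d < fst D' \<and> snd d < snd D')"
  using eta_removal_eq eta_removal_neq[OF assms] by metis

end

lemma linked_right_bounds:
  assumes "linked D D'" and "snd D < snd D'" and "nonempty_seg D" and "nonempty_seg D'"
  shows "fst D < fst D'" and "fst D' \<le> snd D + 1"
proof -
  obtain x y where union: "seg_set D \<union> seg_set D' = {x..y}"
    and not_sub: "\<not> seg_set D \<subseteq> seg_set D'"
    using assms(1) by (auto simp: linked_def)
  show "fst D < fst D'"
    using not_sub assms(2) by (force simp: seg_set_def)
  have "fst D \<in> {x..y}" and "snd D' \<in> {x..y}"
    using union assms(3,4) by (auto simp: seg_set_def nonempty_seg_def)
  then have "snd D + 1 \<in> seg_set D \<union> seg_set D'"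
    using union assms(2,3) by (auto simp: nonempty_seg_def)
  then show "fst D' \<le> snd D + 1"
    by (auto simp: seg_set_def)
qed

theorem mainTheorem17:
  fixes h :: "seg multiset" and D D' :: seg
  assumes "is_mult h"
    and "nonempty_seg D" and "nonempty_seg D'"
    and "admissible D h"
    and "linked D D'" and "snd D < snd D'"
  shows "(non_overlapping D D' h \<longleftrightarrow> eta D' h = eta D' (removal D h))
       \<and> (eta D' h = eta D' (removal D h) \<longleftrightarrow> intermediate_seg D D' h)"
proof -
  interpret admissible_segment h D
    using assms(1,4) by unfold_locales
  have D_D': "fst D < fst D'" "fst D' \<le> snd D + 1"
    using linked_right_bounds assms(2,3,5,6) by auto
  moreover have "fst D' \<le> snd D'"
    using assms(3) by (simp add: nonempty_seg_def)
  ultimately show ?thesis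
    using non_overlapping_iff_rs eta_removal_eq_iff_rs[OF D_D' assms(6)] intermediate_seg_iff_rs
    by simp
qed

end
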